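(* Consider instances of the Stable Matching Problem with Couples (SMP-C) that possess a resident optimal matching, and let $y$ be the mechanism that maps each such instance (given by the stated ROLs) to its resident optimal matching. Then: (1) (Truncation-proofness.) Let $\mathcal{I}$ be an SMP-C instance with resident optimal matching $\mu^*$, where all ROLs are the participants' true preferences. Let $a$ be a single doctor or a couple, and let $\mathcal{I}'$ be the instance obtained from $\mathcal{I}$ by replacing $a$'s ROL with a truncation of it, all other ROLs unchanged. If $\mathcal{I}'$ has a resident optimal matching $\mu'$, then it is not the case that $\mu'(a) \succ_a \mu^*(a)$, where $\succ_a$ is $a$'s true (original) preference. That is, $y$ is strategy-proof for residents when residents may only misreport via truncation. (2) (Reordering can be profitable.) $y$ is not in general strategy-proof when residents may misreport via reordering: there exists an SMP-C instance $\mathcal{I}$ (with true preferences) that has a unique stable matching $\mu^*$ (hence $\mu^*$ is resident optimal), a single doctor $d$, and a reordering of $d$'s ROL (a permutation of the same acceptable programs), all other ROLs unchanged, such that the resulting instance $\mathcal{I}'$ has a resident optimal matching $\mu'$ with $\mu'(d) \succ_d \mu^*(d)$ according to $d$'s true preferences.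
   Context: An SMP-C instance consists of a finite set $D$ of doctors, a finite set $P$ of programs, and a special element $\mathit{nil}$; write $D^+=D\cup\{\mathit{nil}\}$, $P^+=P\cup\{\mathit{nil}\}$. $D$ is partitioned into singles $S$ and coupled doctors $D\setminus S$; the couples form a set $C\subseteq (D\setminus S)\times(D\setminus S)$ of pairs such that every coupled doctor belongs to exactly one pair. Each program $p$ has a quota $q_p\ge 1$. Each participant gives a ranked order list (ROL), a strictly ordered list terminated by $\mathit{nil}$: singles rank elements of $P$, couples rank pairs in $P^+\times P^+$ (terminated by $(\mathit{nil},\mathit{nil})$), programs rank doctors. For a participant $a$, $x \succeq_a y$ means $x$ appears no later than $y$ on $a$'s ROL (or $x=y$); $x$ is acceptable to $a$ if $x\succeq_a \mathit{nil}$; alternatives not on the ROL are unacceptable. For a program $p$ and set $R$ of doctors, $\mathrm{ch}_p(R)$ is the maximal subset of $R$ consisting of acceptable doctors, of size at most $q_p$, such that every chosen doctor is ranked by $p$ above every unchosen doctor of $R$; $\mathrm{ch}_{\mathit{nil}}(R)=R$. A matching $\mu$ maps $D\to P^+$; $\mu^{-1}(p)$ is the set of doctors matched to $p$; for a couple $c=(d_1,d_2)$, $\mu(c)=(\mu(d_1),\mu(d_2))$. Let $\mathit{willAccept}(p,R,\mu)$ mean $R\subseteq \mathrm{ch}_p(\mu^{-1}(p)\cup R)$. Blocking pairs: (i) a single $d$ and $p\in P$ with $p\succ_d\mu(d)$ and $\mathit{willAccept}(p,\{d\},\mu)$; (ii) a couple $c=(d_1,d_2)$ and $(p_1,p_2)\in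 P^+\times P^+$ with $p_1\ne p_2$, $(p_1,p_2)\succ_c\mu(c)$, $\mathit{willAccept}(p_1,\{d_1\},\mu)$ and $\mathit{willAccept}(p_2,\{d_2\},\mu)$; (iii) a couple $c=(d_1,d_2)$ and $p\in P$ with $(p,p)\succ_c \mu(c)$ and $\mathit{willAccept}(p,\{d_1,d_2\},\mu)$. $\mu$ is individually rational if every single gets an acceptable program (or $\mathit{nil}$), every couple gets an acceptable pair (or $(\mathit{nil},\mathit{nil})$), and every program $p$ has $|\mu^{-1}(p)|\le q_p$ with all its matched doctors acceptable to it. $\mu$ is stable if it is individually rational and has no blocking pair. For matchings $\mu_1,\mu_2$, write $\mu_1\succeq_R\mu_2$ if $\mu_1(a)\succeq_a\mu_2(a)$ for every single and every couple $a$. A matching $\mu$ is resident optimal if it is stable and $\mu\succeq_R\mu'$ for every stable matching $\mu'$. A truncation of $a$'s ROL keeps an initial segment of the ROL (then terminated by $\mathit{nil}$, resp. $(\mathit{nil},\mathit{nil})$), making all later entries unacceptable. A reordering of $a$'s ROL lists the same acceptable alternatives in a different order. *)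

theory Defs
  imports Main
begin

text \<open>nil is represented by None. A ROL is stored as the list of its entries
  before the terminating nil; the full ROL is l @ [nil].\<close>

record ('d, 'p) smpc =
  Docs    :: "'d set"
  Progs   :: "'p set"
  Singles :: "'d set"
  Couples :: "('d \<times> 'd) set"
  quota   :: "'p \<Rightarrow> nat"
  srol    :: "'d \<Rightarrow> 'p option list"
  crol    :: "'d \<times> 'd \<Rightarrow> ('p option \<times> 'p option) list"
  prol    :: "'p \<Rightarrow> 'd option list"

definition prefers :: "'a list \<Rightarrow> 'a \<Rightarrow> 'a \<Rightarrow> 'a \<Rightarrow> bool" where
  "prefers l t x y \<longleftrightarrow>
     (let L = l @ [t] in
       x \<in> set L \<and> (y \<notin> set L \<or> (\<exists>i j. i < j \<and> j < length L \<and> L ! i = x \<and> L ! j = y)))"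

definition weakpref :: "'a list \<Rightarrow> 'a \<Rightarrow> 'a \<Rightarrow> 'a \<Rightarrow> bool" where
  "weakpref l t x y \<longleftrightarrow> x = y \<or> prefers l t x y"

definition wf_smpc :: "('d, 'p) smpc \<Rightarrow> bool" where
  "wf_smpc I \<longleftrightarrow>
     finite (Docs I) \<and> finite (Progs I) \<and>
     Singles I \<subseteq> Docs I \<and>
     Couples I \<subseteq> (Docs I - Singles I) \<times> (Docs I - Singles I) \<and>
     (\<forall>c \<in> Couples I. fst c \<noteq> snd c) \<and>
     (\<forall>d \<in> Docs I - Singles I. \<exists>!c. c \<in> Couples I \<and> (fst c = d \<or> snd c = d)) \<and>
     (\<forall>p \<in> Progs I. quota I p \<ge> 1) \<and>
     (\<forall>d \<in> Singles I. distinct (srol I d) \<and> set (srol I d) \<subseteq> Some ` Progs I) \<and>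
     (\<forall>c \<in> Couples I. distinct (crol I c) \<and> (None, None) \<notin> set (crol I c) \<and>
        set (crol I c) \<subseteq> (insert None (Some ` Progs I)) \<times> (insert None (Some ` Progs I))) \<and>
     (\<forall>p \<in> Progs I. distinct (prol I p) \<and> set (prol I p) \<subseteq> Some ` Docs I)"

definition prog_acceptable :: "('d, 'p) smpc \<Rightarrow> 'p \<Rightarrow> 'd \<Rightarrow> bool" where
  "prog_acceptable I p d \<longleftrightarrow> weakpref (prol I p) None (Some d) None"

definition choice_ok :: "('d, 'p) smpc \<Rightarrow> 'p \<Rightarrow> 'd set \<Rightarrow> 'd set \<Rightarrow> bool" where
  "choice_ok I p R X \<longleftrightarrow> X \<subseteq> R \<and> (\<forall>d \<in> X. prog_acceptable I p d) \<and>
     card X \<le> quota I p \<and>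
     (\<forall>d \<in> X. \<forall>d' \<in> R - X. prefers (prol I p) None (Some d) (Some d'))"

definition ch :: "('d, 'p) smpc \<Rightarrow> 'p \<Rightarrow> 'd set \<Rightarrow> 'd set" where
  "ch I p R = (THE X. choice_ok I p R X \<and> \<not> (\<exists>Y. choice_ok I p R Y \<and> X \<subset> Y))"

definition is_matching :: "('d, 'p) smpc \<Rightarrow> ('d \<Rightarrow> 'p option) \<Rightarrow> bool" where
  "is_matching I \<mu> \<longleftrightarrow> (\<forall>d. (d \<in> Docs I \<longrightarrow> \<mu> d \<in> insert None (Some ` Progs I)) \<and>
                              (d \<notin> Docs I \<longrightarrow> \<mu> d = None))"

definition assigned :: "('d, 'p) smpc \<Rightarrow> ('d \<Rightarrow> 'p option) \<Rightarrow> 'p \<Rightarrow> 'd set" where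
  "assigned I \<mu> p = {d \<in> Docs I. \<mu> d = Some p}"

definition will_accept :: "('d, 'p) smpc \<Rightarrow> 'p option \<Rightarrow> 'd set \<Rightarrow> ('d \<Rightarrow> 'p option) \<Rightarrow> bool" where
  "will_accept I p R \<mu> = (case p of None \<Rightarrow> True
      | Some q \<Rightarrow> R \<subseteq> ch I q (assigned I \<mu> q \<union> R))"

definition couple_match :: "('d \<Rightarrow> 'p option) \<Rightarrow> 'd \<times> 'd \<Rightarrow> 'p option \<times> 'p option" where
  "couple_match \<mu> c = (\<mu> (fst c), \<mu> (snd c))"

definition indiv_rational :: "('d, 'p) smpc \<Rightarrow> ('d \<Rightarrow> 'p option) \<Rightarrow> bool" where
  "indiv_rational I \<mu> \<longleftrightarrow>
     (\<forall>d \<in> Singles I. weakpref (srol I d) None (\<mu> d) None) \<and>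
     (\<forall>c \<in> Couples I. weakpref (crol I c) (None, None) (couple_match \<mu> c) (None, None)) \<and>
     (\<forall>p \<in> Progs I. card (assigned I \<mu> p) \<le> quota I p \<and>
        (\<forall>d \<in> assigned I \<mu> p. prog_acceptable I p d))"

definition has_blocking_pair :: "('d, 'p) smpc \<Rightarrow> ('d \<Rightarrow> 'p option) \<Rightarrow> bool" where
  "has_blocking_pair I \<mu> \<longleftrightarrow>
     (\<exists>d \<in> Singles I. \<exists>p \<in> Progs I.
        prefers (srol I d) None (Some p) (\<mu> d) \<and> will_accept I (Some p) {d} \<mu>) \<or>
     (\<exists>c \<in> Couples I. \<exists>p1 \<in> insert None (Some ` Progs I). \<exists>p2 \<in> insert None (Some ` Progs I).
        p1 \<noteq> p2 \<and> prefers (crol I c) (None, None) (p1, p2) (couple_match \<mu> c) \<and>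
        will_accept I p1 {fst c} \<mu> \<and> will_accept I p2 {snd c} \<mu>) \<or>
     (\<exists>c \<in> Couples I. \<exists>p \<in> Progs I.
        prefers (crol I c) (None, None) (Some p, Some p) (couple_match \<mu> c) \<and>
        will_accept I (Some p) {fst c, snd c} \<mu>)"

definition stable :: "('d, 'p) smpc \<Rightarrow> ('d \<Rightarrow> 'p option) \<Rightarrow> bool" where
  "stable I \<mu> \<longleftrightarrow> is_matching I \<mu> \<and> indiv_rational I \<mu> \<and> \<not> has_blocking_pair I \<mu>"

definition resident_weakly_better :: "('d, 'p) smpc \<Rightarrow> ('d \<Rightarrow> 'p option) \<Rightarrow> ('d \<Rightarrow> 'p option) \<Rightarrow> bool" where
  "resident_weakly_better I \<mu>1 \<mu>2 \<longleftrightarrow>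
     (\<forall>d \<in> Singles I. weakpref (srol I d) None (\<mu>1 d) (\<mu>2 d)) \<and>
     (\<forall>c \<in> Couples I. weakpref (crol I c) (None, None) (couple_match \<mu>1 c) (couple_match \<mu>2 c))"

definition resident_optimal :: "('d, 'p) smpc \<Rightarrow> ('d \<Rightarrow> 'p option) \<Rightarrow> bool" where
  "resident_optimal I \<mu> \<longleftrightarrow> stable I \<mu> \<and> (\<forall>\<mu>'. stable I \<mu>' \<longrightarrow> resident_weakly_better I \<mu> \<mu>')"

end

theory Submission
  imports Defs
begin

text \<open>Truncation: suppose a reports a truncation of its list and the resident optimal matching
  \<mu>' of the reported instance gives a something it truly prefers to \<mu>*(a). Then \<mu>'(a) is not nil,
  so it survives the truncation; all of a's blocking options under the true list rank above
  \<mu>'(a) and therefore survive as well, in the same order. Hence \<mu>' is stable for the true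
  preferences, and resident optimality of \<mu>* gives \<mu>*(a) \<succeq> \<mu>'(a), a contradiction.

  Reordering: with two programs of quota one and three doctors, a single doctor d ranking
  p1 above p0 is unmatched in the unique stable matching. Reporting p0 first creates a second
  stable matching, the resident optimal one, which gives d the program p0; under d's true list
  it is blocked by d and p1, since p1 ranks d above its assigned coupled doctor.\<close>

definition precedes :: "'a list \<Rightarrow> 'a \<Rightarrow> 'a \<Rightarrow> bool" where
  "precedes L x y \<longleftrightarrow> (\<exists>i j. i < j \<and> j < length L \<and> L ! i = x \<and> L ! j = y)"

lemma prefers_iff_precedes:
  "prefers l t x y \<longleftrightarrow> x \<in> set (l @ [t]) \<and> (y \<notin> set (l @ [t]) \<or> precedes (l @ [t]) x y)"
  unfolding prefers_def precedes_def Let_def by simp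

lemma precedes_Nil [simp]: "\<not> precedes [] x y"
  by (simp add: precedes_def)

lemma precedes_Cons [simp]:
  "precedes (a # L) x y \<longleftrightarrow> (a = x \<and> y \<in> set L) \<or> precedes L x y"
proof
  assume "precedes (a # L) x y"
  then obtain i j where ij: "i < j" "j < Suc (length L)" "(a # L) ! i = x" "(a # L) ! j = y"
    unfolding precedes_def by auto
  then obtain j' where j: "j = Suc j'"
    by (cases j) auto
  show "(a = x \<and> y \<in> set L) \<or> precedes L x y"
  proof (cases i)
    case 0
    then show ?thesis using ij j by auto
  next
    case (Suc i')
    then show ?thesis using ij j unfolding precedes_def by auto
  qed
next
  assume "(a = x \<and> y \<in> set L) \<or> precedes L x y"
  then show "precedes (a # L) x y"
  proof
    assume "a = x \<and> y \<in> set L"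
    then obtain j where "j < length L" "L ! j = y" "a = x"
      by (auto simp: in_set_conv_nth)
    then show ?thesis unfolding precedes_def
      by (intro exI[of _ 0] exI[of _ "Suc j"]) auto
  next
    assume "precedes L x y"
    then obtain i j where "i < j" "j < length L" "L ! i = x" "L ! j = y"
      unfolding precedes_def by blast
    then show ?thesis unfolding precedes_def
      by (intro exI[of _ "Suc i"] exI[of _ "Suc j"]) auto
  qed
qed

lemma precedes_append:
  "precedes (xs @ ys) x y \<longleftrightarrow> precedes xs x y \<or> (x \<in> set xs \<and> y \<in> set ys) \<or> precedes ys x y"
  by (induction xs) auto

lemma precedes_in_set: "precedes L x y \<Longrightarrow> x \<in> set L \<and> y \<in> set L"
  by (induction L) auto

lemma precedes_asym: "distinct L \<Longrightarrow> precedes L x y \<Longrightarrow> \<not> precedes L y x"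
  by (induction L) (auto dest: precedes_in_set)

lemma precedes_irrefl: "distinct L \<Longrightarrow> \<not> precedes L x x"
  using precedes_asym by fast

lemma weakpref_not_prefers:
  "distinct (l @ [t]) \<Longrightarrow> weakpref l t x y \<Longrightarrow> \<not> prefers l t y x"
  unfolding weakpref_def prefers_iff_precedes using precedes_asym precedes_irrefl by metis

lemma prefers_end: "x \<in> set l \<Longrightarrow> prefers l t x t"
  by (simp add: prefers_iff_precedes precedes_append)

lemma weakpref_end_in_set: "weakpref l t x t \<Longrightarrow> x \<noteq> t \<Longrightarrow> x \<in> set l"
  unfolding weakpref_def prefers_def Let_def by auto

lemma prefers_take:
  assumes dist: "distinct (l @ [t])" and x: "x \<in> set (take k l)" and yx: "prefers l t y x"
  shows "prefers (take k l) t y x"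
proof -
  have l_split: "l @ [t] = take k l @ (drop k l @ [t])"
    by simp
  have "x \<notin> set (drop k l @ [t])"
    using dist x by (metis l_split distinct_append disjoint_iff)
  moreover have "x \<in> set (l @ [t])"
    using x by (auto dest: in_set_takeD)
  ultimately have "precedes (take k l) y x"
    using yx unfolding prefers_iff_precedes by (metis l_split precedes_append precedes_in_set)
  then show ?thesis
    by (auto simp: prefers_iff_precedes precedes_append dest: precedes_in_set)
qed

lemma prefers_acceptable_in_take:
  assumes dist: "distinct (l @ [t])" and xy: "prefers l t x y" and y: "weakpref l t y t"
    and x: "weakpref (take k l) t x t"
  shows "x \<in> set (take k l)"
proof (rule weakpref_end_in_set[OF x])
  show "x \<noteq> t"
    using weakpref_not_prefers[OF dist y] xy by blast
qed

lemma will_accept_srol_update [simp]: "will_accept (I\<lparr>srol := f\<rparr>) = will_accept I"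
  by (intro ext) (simp add: will_accept_def ch_def choice_ok_def prog_acceptable_def assigned_def
      split: option.splits)

lemma will_accept_crol_update [simp]: "will_accept (I\<lparr>crol := f\<rparr>) = will_accept I"
  by (intro ext) (simp add: will_accept_def ch_def choice_ok_def prog_acceptable_def assigned_def
      split: option.splits)

lemma assigned_srol_update [simp]: "assigned (I\<lparr>srol := f\<rparr>) = assigned I"
  by (intro ext) (simp add: assigned_def)

lemma assigned_crol_update [simp]: "assigned (I\<lparr>crol := f\<rparr>) = assigned I"
  by (intro ext) (simp add: assigned_def)

lemma prog_acceptable_srol_update [simp]: "prog_acceptable (I\<lparr>srol := f\<rparr>) = prog_acceptable I"
  by (intro ext) (simp add: prog_acceptable_def)

lemma prog_acceptable_crol_update [simp]: "prog_acceptable (I\<lparr>crol := f\<rparr>) = prog_acceptable I"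
  by (intro ext) (simp add: prog_acceptable_def)

lemma stable_of_truncated_srol:
  assumes wf: "wf_smpc I" and d: "d \<in> Singles I"
    and st: "stable (I\<lparr>srol := (srol I)(d := take k (srol I d))\<rparr>) \<mu>"
    and kept: "\<mu> d \<in> set (take k (srol I d))"
  shows "stable I \<mu>"
proof -
  define l where "l = srol I d"
  have dist: "distinct (l @ [None])"
    using wf d unfolding wf_smpc_def l_def by auto
  have "\<mu> d \<in> set l"
    using kept unfolding l_def by (auto dest: in_set_takeD)
  then have "indiv_rational I \<mu>"
    using st prefers_end[of "\<mu> d" l None]
    unfolding stable_def indiv_rational_def weakpref_def l_def by (auto split: if_splits)
  moreover have "\<not> has_blocking_pair I \<mu>"
    using st prefers_take[OF dist kept[folded l_def]]
    unfolding stable_def has_blocking_pair_def l_def by (auto split: if_splits)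
  ultimately show ?thesis
    using st unfolding stable_def is_matching_def by simp
qed

lemma stable_of_truncated_crol:
  assumes wf: "wf_smpc I" and c: "c \<in> Couples I"
    and st: "stable (I\<lparr>crol := (crol I)(c := take k (crol I c))\<rparr>) \<mu>"
    and kept: "couple_match \<mu> c \<in> set (take k (crol I c))"
  shows "stable I \<mu>"
proof -
  define l where "l = crol I c"
  have dist: "distinct (l @ [(None, None)])"
    using wf c unfolding wf_smpc_def l_def by auto
  have "couple_match \<mu> c \<in> set l"
    using kept unfolding l_def by (auto dest: in_set_takeD)
  then have "indiv_rational I \<mu>"
    using st prefers_end[of "couple_match \<mu> c" l "(None, None)"]
    unfolding stable_def indiv_rational_def weakpref_def l_def by (auto split: if_splits)
  moreover have "\<not> has_blocking_pair I \<mu>"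
  proof -
    have "prefers (crol (I\<lparr>crol := (crol I)(c := take k l)\<rparr>) c') (None, None) x (couple_match \<mu> c')"
      if "prefers (crol I c') (None, None) x (couple_match \<mu> c')" for c' x
      using that prefers_take[OF dist kept[folded l_def]] unfolding l_def by (cases x) auto
    then show ?thesis
      using st unfolding stable_def has_blocking_pair_def l_def by simp
  qed
  ultimately show ?thesis
    using st unfolding stable_def is_matching_def by simp
qed

lemma truncation_not_profitable_single:
  assumes wf: "wf_smpc I" and opt: "resident_optimal I \<mu>s" and d: "d \<in> Singles I"
    and opt': "resident_optimal (I\<lparr>srol := (srol I)(d := take k (srol I d))\<rparr>) \<mu>'"
  shows "\<not> prefers (srol I d) None (\<mu>' d) (\<mu>s d)"
proof
  assume better: "prefers (srol I d) None (\<mu>' d) (\<mu>s d)"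
  have dist: "distinct (srol I d @ [None])"
    using wf d unfolding wf_smpc_def by auto
  have st': "stable (I\<lparr>srol := (srol I)(d := take k (srol I d))\<rparr>) \<mu>'"
    using opt' unfolding resident_optimal_def by simp
  have "\<mu>' d \<in> set (take k (srol I d))"
  proof (rule prefers_acceptable_in_take[OF dist better])
    show "weakpref (srol I d) None (\<mu>s d) None"
      using opt d unfolding resident_optimal_def stable_def indiv_rational_def by blast
    show "weakpref (take k (srol I d)) None (\<mu>' d) None"
      using st' d unfolding stable_def indiv_rational_def by auto
  qed
  then have "stable I \<mu>'"
    using stable_of_truncated_srol[OF wf d st'] by blast
  then have "weakpref (srol I d) None (\<mu>s d) (\<mu>' d)"
    using opt d unfolding resident_optimal_def resident_weakly_better_def by blast
  then show False
    using weakpref_not_prefers[OF dist] better by blast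
qed

lemma truncation_not_profitable_couple:
  assumes wf: "wf_smpc I" and opt: "resident_optimal I \<mu>s" and c: "c \<in> Couples I"
    and opt': "resident_optimal (I\<lparr>crol := (crol I)(c := take k (crol I c))\<rparr>) \<mu>'"
  shows "\<not> prefers (crol I c) (None, None) (couple_match \<mu>' c) (couple_match \<mu>s c)"
proof
  assume better: "prefers (crol I c) (None, None) (couple_match \<mu>' c) (couple_match \<mu>s c)"
  have dist: "distinct (crol I c @ [(None, None)])"
    using wf c unfolding wf_smpc_def by auto
  have st': "stable (I\<lparr>crol := (crol I)(c := take k (crol I c))\<rparr>) \<mu>'"
    using opt' unfolding resident_optimal_def by simp
  have "couple_match \<mu>' c \<in> set (take k (crol I c))"
  proof (rule prefers_acceptable_in_take[OF dist better])
    show "weakpref (crol I c) (None, None) (couple_match \<mu>s c) (None, None)"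
      using opt c unfolding resident_optimal_def stable_def indiv_rational_def by blast
    show "weakpref (take k (crol I c)) (None, None) (couple_match \<mu>' c) (None, None)"
      using st' c unfolding stable_def indiv_rational_def by auto
  qed
  then have "stable I \<mu>'"
    using stable_of_truncated_crol[OF wf c st'] by blast
  then have "weakpref (crol I c) (None, None) (couple_match \<mu>s c) (couple_match \<mu>' c)"
    using opt c unfolding resident_optimal_def resident_weakly_better_def by blast
  then show False
    using weakpref_not_prefers[OF dist] better by blast
qed

lemma
  assumes fin: "finite R" and dist: "distinct (prol I p @ [None])"
  shows choice_ok_ch: "choice_ok I p R (ch I p R)"
    and choice_ok_subset_ch: "choice_ok I p R Y \<Longrightarrow> Y \<subseteq> ch I p R"
proof -
  define F where "F = {X. choice_ok I p R X}"
  have "F \<subseteq> Pow R"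
    unfolding F_def choice_ok_def by auto
  then have finF: "finite F"
    using fin finite_subset by blast
  have "{} \<in> F"
    unfolding F_def choice_ok_def by auto
  then have "Max (card ` F) \<in> card ` F"
    using finF by (intro Max_in) auto
  then obtain X0 where X0: "X0 \<in> F" "Max (card ` F) = card X0"
    by blast
  have X0_max: "card Y \<le> card X0" if "Y \<in> F" for Y
    using finF that X0(2) by (metis Max_ge finite_imageI imageI)
  have chain: "X \<subseteq> Y \<or> Y \<subseteq> X" if "X \<in> F" "Y \<in> F" for X Y
  proof (rule ccontr)
    assume "\<not> (X \<subseteq> Y \<or> Y \<subseteq> X)"
    then obtain x y where "x \<in> X" "x \<notin> Y" "y \<in> Y" "y \<notin> X"
      by blast
    then have "prefers (prol I p) None (Some x) (Some y)" "prefers (prol I p) None (Some y) (Some x)"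
      using that unfolding F_def choice_ok_def by blast+
    then show False
      using weakpref_not_prefers[OF dist] unfolding weakpref_def by blast
  qed
  have greatest: "Y \<subseteq> X0" if "Y \<in> F" for Y
  proof -
    have "finite Y"
      using that fin unfolding F_def choice_ok_def by (blast intro: finite_subset)
    then show ?thesis
      using chain[OF X0(1) that] X0_max[OF that] card_seteq by blast
  qed
  have "ch I p R = X0"
    unfolding ch_def
  proof (rule the_equality)
    show "choice_ok I p R X0 \<and> \<not> (\<exists>Y. choice_ok I p R Y \<and> X0 \<subset> Y)"
      using X0(1) greatest unfolding F_def by blast
    show "X = X0" if "choice_ok I p R X \<and> \<not> (\<exists>Y. choice_ok I p R Y \<and> X \<subset> Y)" for X
      using that X0(1) greatest unfolding F_def by blast
  qed
  then show "choice_ok I p R (ch I p R)" "choice_ok I p R Y \<Longrightarrow> Y \<subseteq> ch I p R"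
    using X0(1) greatest unfolding F_def by auto
qed

lemma will_accept_quota_one:
  assumes q: "quota I p = 1" and dist: "distinct (prol I p @ [None])" and fin: "finite (Docs I)"
  shows "will_accept I (Some p) {x} \<mu> \<longleftrightarrow> prog_acceptable I p x \<and>
     (\<forall>y \<in> assigned I \<mu> p - {x}. prefers (prol I p) None (Some x) (Some y))"
proof -
  define R where "R = assigned I \<mu> p \<union> {x}"
  have finR: "finite R"
    unfolding R_def assigned_def using fin by auto
  have ch_ok: "choice_ok I p R (ch I p R)"
    by (rule choice_ok_ch[OF finR dist])
  have "x \<in> ch I p R \<longleftrightarrow> choice_ok I p R {x}"
  proof
    assume x: "x \<in> ch I p R"
    have "card (ch I p R) \<le> 1" "finite (ch I p R)"
      using ch_ok q finR unfolding choice_ok_def by (auto intro: finite_subset)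
    then have "ch I p R = {x}"
      using x by (auto simp: card_le_Suc0_iff_eq)
    then show "choice_ok I p R {x}"
      using ch_ok by simp
  qed (use choice_ok_subset_ch[OF finR dist] in blast)
  moreover have "will_accept I (Some p) {x} \<mu> \<longleftrightarrow> x \<in> ch I p R"
    by (simp add: will_accept_def R_def)
  moreover have "choice_ok I p R {x} \<longleftrightarrow> prog_acceptable I p x \<and>
      (\<forall>y \<in> assigned I \<mu> p - {x}. prefers (prol I p) None (Some x) (Some y))"
    by (auto simp: choice_ok_def R_def q)
  ultimately show ?thesis
    by blast
qed

lemma not_will_accept_pair_quota_one:
  assumes q: "quota I p = 1" and dist: "distinct (prol I p @ [None])" and fin: "finite (Docs I)"
    and ab: "a \<noteq> b"
  shows "\<not> will_accept I (Some p) {a, b} \<mu>"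
proof
  define R where "R = assigned I \<mu> p \<union> {a, b}"
  have finR: "finite R"
    unfolding R_def assigned_def using fin by auto
  have ch_ok: "choice_ok I p R (ch I p R)"
    by (rule choice_ok_ch[OF finR dist])
  assume "will_accept I (Some p) {a, b} \<mu>"
  then have "{a, b} \<subseteq> ch I p R"
    unfolding will_accept_def R_def by simp
  moreover have "finite (ch I p R)"
    using ch_ok finR unfolding choice_ok_def by (auto intro: finite_subset)
  ultimately have "card {a, b} \<le> card (ch I p R)"
    by (rule card_mono[rotated])
  also have "\<dots> \<le> 1"
    using ch_ok q unfolding choice_ok_def by simp
  finally show False
    using ab by simp
qed

lemma will_accept_None [simp]: "will_accept I None R \<mu>"
  by (simp add: will_accept_def)

definition reordering_instance :: "(nat, nat) smpc" where
  "reordering_instance =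
    \<lparr>Docs = {0, 1, 2}, Progs = {0, 1}, Singles = {0}, Couples = {(1, 2)}, quota = (\<lambda>_. 1),
     srol = (\<lambda>d. if d = 0 then [Some 1, Some 0] else []),
     crol = (\<lambda>c. if c = (1, 2) then [(Some 1, None), (Some 1, Some 0), (Some 0, Some 1)] else []),
     prol = (\<lambda>p. if p = 0 then [Some 2, Some 1, Some 0]
                 else if p = 1 then [Some 2, Some 0, Some 1] else [])\<rparr>"

abbreviation reordered_instance :: "(nat, nat) smpc" where
  "reordered_instance \<equiv> reordering_instance\<lparr>srol := (srol reordering_instance)(0 := [Some 0, Some 1])\<rparr>"

definition matching3 :: "nat option \<Rightarrow> nat option \<Rightarrow> nat option \<Rightarrow> nat \<Rightarrow> nat option" where
  "matching3 a b c = (\<lambda>d. if d = 0 then a else if d = 1 then b else if d = 2 then c else None)"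

lemma reordering_instance_simps [simp]:
  "Docs reordering_instance = {0, 1, 2}" "Progs reordering_instance = {0, 1}"
  "Singles reordering_instance = {0}" "Couples reordering_instance = {(1, 2)}"
  "quota reordering_instance p = 1"
  "srol reordering_instance d = (if d = 0 then [Some 1, Some 0] else [])"
  "crol reordering_instance c =
     (if c = (1, 2) then [(Some 1, None), (Some 1, Some 0), (Some 0, Some 1)] else [])"
  "prol reordering_instance p = (if p = 0 then [Some 2, Some 1, Some 0]
     else if p = 1 then [Some 2, Some 0, Some 1] else [])"
  by (simp_all add: reordering_instance_def)

lemma wf_reordering_instance: "wf_smpc reordering_instance"
  unfolding wf_smpc_def by auto

lemma will_accept_reordering_instance:
  "p \<in> {0, 1} \<Longrightarrow> will_accept reordering_instance (Some p) {x} \<mu> \<longleftrightarrow>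
     prog_acceptable reordering_instance p x \<and>
     (\<forall>y \<in> assigned reordering_instance \<mu> p - {x}.
        prefers (prol reordering_instance p) None (Some x) (Some y))"
  by (rule will_accept_quota_one) auto

lemma not_will_accept_pair_reordering_instance:
  "p \<in> {0, 1} \<Longrightarrow> a \<noteq> b \<Longrightarrow> \<not> will_accept reordering_instance (Some p) {a, b} \<mu>"
  by (rule not_will_accept_pair_quota_one) auto

lemma assigned_matching3:
  "assigned reordering_instance (matching3 a b c) p =
     (if a = Some p then {0} else {}) \<union> (if b = Some p then {1} else {}) \<union>
     (if c = Some p then {2} else {})"
  by (auto simp: assigned_def matching3_def)

lemma matching_eq_matching3:
  assumes "is_matching I \<mu>" "Docs I = {0, 1, 2}" "Progs I = {0, 1}"
  obtains a b c where "a \<in> {None, Some 0, Some 1}" "b \<in> {None, Some 0, Some 1}"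
    "c \<in> {None, Some 0, Some 1}" "\<mu> = matching3 a b c"
proof
  show "\<mu> = matching3 (\<mu> 0) (\<mu> 1) (\<mu> 2)"
    using assms unfolding is_matching_def matching3_def by (intro ext) auto
qed (use assms in \<open>auto simp: is_matching_def\<close>)

lemmas reordering_instance_stability_simps =
  stable_def indiv_rational_def has_blocking_pair_def weakpref_def prefers_iff_precedes
  couple_match_def prog_acceptable_def will_accept_reordering_instance
  not_will_accept_pair_reordering_instance assigned_matching3 is_matching_def

lemma stable_reordering_instance_iff:
  "a \<in> {None, Some 0, Some 1} \<Longrightarrow> b \<in> {None, Some 0, Some 1} \<Longrightarrow> c \<in> {None, Some 0, Some 1} \<Longrightarrow>
   stable reordering_instance (matching3 a b c) \<longleftrightarrow> (a, b, c) = (None, Some 0, Some 1)"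
  by (elim insertE; simp add: reordering_instance_stability_simps; simp add: matching3_def)

lemma stable_reordered_instance_iff:
  "a \<in> {None, Some 0, Some 1} \<Longrightarrow> b \<in> {None, Some 0, Some 1} \<Longrightarrow> c \<in> {None, Some 0, Some 1} \<Longrightarrow>
   stable reordered_instance (matching3 a b c) \<longleftrightarrow>
     (a, b, c) = (None, Some 0, Some 1) \<or> (a, b, c) = (Some 0, Some 1, None)"
  by (elim insertE; simp add: reordering_instance_stability_simps; simp add: matching3_def)

lemma unique_stable_reordering_instance:
  "stable reordering_instance \<mu> \<longleftrightarrow> \<mu> = matching3 None (Some 0) (Some 1)"
proof
  assume st: "stable reordering_instance \<mu>"
  then have "is_matching reordering_instance \<mu>"
    by (simp add: stable_def)
  then obtain a b c where "a \<in> {None, Some 0, Some 1}" "b \<in> {None, Some 0, Some 1}"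
      "c \<in> {None, Some 0, Some 1}" "\<mu> = matching3 a b c"
    by (rule matching_eq_matching3) auto
  then show "\<mu> = matching3 None (Some 0) (Some 1)"
    using st stable_reordering_instance_iff by simp
qed (simp add: stable_reordering_instance_iff)

lemma resident_optimal_reordered_instance:
  "resident_optimal reordered_instance (matching3 (Some 0) (Some 1) None)"
  unfolding resident_optimal_def
proof (intro conjI allI impI)
  show "stable reordered_instance (matching3 (Some 0) (Some 1) None)"
    by (rule stable_reordered_instance_iff[THEN iffD2]) auto
  fix \<mu>
  assume st: "stable reordered_instance \<mu>"
  then have "is_matching reordered_instance \<mu>"
    by (simp add: stable_def)
  then obtain a b c where "a \<in> {None, Some 0, Some 1}" "b \<in> {None, Some 0, Some 1}"
      "c \<in> {None, Some 0, Some 1}" "\<mu> = matching3 a b c"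
    by (rule matching_eq_matching3) auto
  then have "\<mu> = matching3 None (Some 0) (Some 1) \<or> \<mu> = matching3 (Some 0) (Some 1) None"
    using st stable_reordered_instance_iff by auto
  then show "resident_weakly_better reordered_instance (matching3 (Some 0) (Some 1) None) \<mu>"
    by (auto simp: resident_weakly_better_def weakpref_def prefers_iff_precedes couple_match_def
        matching3_def)
qed

lemma reordering_can_be_profitable:
  "\<exists>(I :: (nat, nat) smpc) \<mu>s d l' \<mu>'.
      wf_smpc I \<and> (\<exists>!\<mu>. stable I \<mu>) \<and> stable I \<mu>s \<and> d \<in> Singles I \<and>
      distinct l' \<and> set l' = set (srol I d) \<and>
      resident_optimal (I\<lparr>srol := (srol I)(d := l')\<rparr>) \<mu>' \<and>
      prefers (srol I d) None (\<mu>' d) (\<mu>s d)"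
proof (intro exI conjI)
  show "wf_smpc reordering_instance"
    by (rule wf_reordering_instance)
  show "\<exists>!\<mu>. stable reordering_instance \<mu>"
    "stable reordering_instance (matching3 None (Some 0) (Some 1))"
    using unique_stable_reordering_instance by auto
  show "0 \<in> Singles reordering_instance"
    "distinct [Some (0::nat), Some 1]"
    "set [Some (0::nat), Some 1] = set (srol reordering_instance 0)"
    by auto
  show "resident_optimal reordered_instance (matching3 (Some 0) (Some 1) None)"
    by (rule resident_optimal_reordered_instance)
  show "prefers (srol reordering_instance 0) None (matching3 (Some 0) (Some 1) None 0)
      (matching3 None (Some 0) (Some 1) 0)"
    by (simp add: prefers_iff_precedes matching3_def)
qed

theorem theorem1:
  shows
  "(\<forall>(I :: ('d, 'p) smpc) \<mu>s d k \<mu>'.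
      wf_smpc I \<and> resident_optimal I \<mu>s \<and> d \<in> Singles I \<and>
      resident_optimal (I\<lparr>srol := (srol I)(d := take k (srol I d))\<rparr>) \<mu>'
      \<longrightarrow> \<not> prefers (srol I d) None (\<mu>' d) (\<mu>s d))
   \<and>
   (\<forall>(I :: ('d, 'p) smpc) \<mu>s c k \<mu>'.
      wf_smpc I \<and> resident_optimal I \<mu>s \<and> c \<in> Couples I \<and>
      resident_optimal (I\<lparr>crol := (crol I)(c := take k (crol I c))\<rparr>) \<mu>'
      \<longrightarrow> \<not> prefers (crol I c) (None, None) (couple_match \<mu>' c) (couple_match \<mu>s c))
   \<and>
   (\<exists>(I :: (nat, nat) smpc) \<mu>s d l' \<mu>'.
      wf_smpc I \<and> (\<exists>!\<mu>. stable I \<mu>) \<and> stable I \<mu>s \<and> d \<in> Singles I \<and>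
      distinct l' \<and> set l' = set (srol I d) \<and>
      resident_optimal (I\<lparr>srol := (srol I)(d := l')\<rparr>) \<mu>' \<and>
      prefers (srol I d) None (\<mu>' d) (\<mu>s d))"
  by (intro conjI allI impI reordering_can_be_profitable; elim conjE)
    (rule truncation_not_profitable_single truncation_not_profitable_couple; assumption)+

end
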